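(* Let $(\frac pq,\frac rs)$ be a Farey pair of order $n$ with $q<s$, let $d=\lfloor n/q\rfloor$, $\alpha\in(0,1)$, $\beta=1-\alpha$, and $\phi_\alpha(t)=(t^q-\beta)^d-\alpha^dt^{qd-s}$. Then $\phi_\alpha$ has no multiple root lying in the set $\hat{\mathcal K}_n(q,s)$.
   Context: A matrix is stochastic if it is entrywise nonnegative with all row sums $1$; $\Theta_n$ is the set of all eigenvalues of all $n\times n$ stochastic matrices and $\partial\Theta_n$ its boundary. $\mathcal{F}_n=\{p/q:0\le p<q\le n,\ \gcd(p,q)=1\}$; a Farey pair of order $n$ is a pair $(\frac pq,\frac rs)$ of elements of $\mathcal F_n$ with $\frac pq<\frac rs$ and no element of $\mathcal F_n$ strictly between them. For such a pair, $\arg(q,s)=(\frac{2\pi p}{q},\frac{2\pi r}{s})\cup(\frac{2\pi(s-r)}{s},\frac{2\pi(q-p)}{q})$ and $\hat{\mathcal K}_n(q,s)=\{z\in\partial\Theta_n:\arg(z)\in\arg(q,s)\}$, with arguments taken in $[0,2\pi)$. *)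

theory Defs
  imports "HOL-Analysis.Analysis"
begin

text \<open>n x n real matrices are represented as functions nat \<Rightarrow> nat \<Rightarrow> real,
  only entries with indices below n are relevant.\<close>

definition stochastic :: "nat \<Rightarrow> (nat \<Rightarrow> nat \<Rightarrow> real) \<Rightarrow> bool" where
  "stochastic n A \<longleftrightarrow> (\<forall>i<n. \<forall>j<n. A i j \<ge> 0) \<and> (\<forall>i<n. (\<Sum>j<n. A i j) = 1)"

definition is_eigenvalue :: "nat \<Rightarrow> (nat \<Rightarrow> nat \<Rightarrow> real) \<Rightarrow> complex \<Rightarrow> bool" where
  "is_eigenvalue n A mu \<longleftrightarrow>
     (\<exists>v :: nat \<Rightarrow> complex. (\<exists>i<n. v i \<noteq> 0) \<and>
        (\<forall>i<n. (\<Sum>j<n. complex_of_real (A i j) * v j) = mu * v i))"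

definition Theta :: "nat \<Rightarrow> complex set" where
  "Theta n = {mu. \<exists>A. stochastic n A \<and> is_eigenvalue n A mu}"

definition in_Farey :: "nat \<Rightarrow> nat \<Rightarrow> nat \<Rightarrow> bool" where
  "in_Farey n p q \<longleftrightarrow> p < q \<and> q \<le> n \<and> coprime p q"

definition Farey_pair :: "nat \<Rightarrow> nat \<Rightarrow> nat \<Rightarrow> nat \<Rightarrow> nat \<Rightarrow> bool" where
  "Farey_pair n p q r s \<longleftrightarrow> in_Farey n p q \<and> in_Farey n r s \<and>
     real p / real q < real r / real s \<and>
     \<not> (\<exists>a b. in_Farey n a b \<and> real p / real q < real a / real b \<and> real a / real b < real r / real s)"

definition arg2pi :: "complex \<Rightarrow> real" where
  "arg2pi z = (if Arg z < 0 then Arg z + 2 * pi else Arg z)"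

definition arg_set :: "nat \<Rightarrow> nat \<Rightarrow> nat \<Rightarrow> nat \<Rightarrow> real set" where
  "arg_set p q r s = {2*pi*real p / real q <..< 2*pi*real r / real s}
      \<union> {2*pi*(real s - real r) / real s <..< 2*pi*(real q - real p) / real q}"

definition K_hat :: "nat \<Rightarrow> nat \<Rightarrow> nat \<Rightarrow> nat \<Rightarrow> nat \<Rightarrow> complex set" where
  "K_hat n p q r s = {z \<in> frontier (Theta n). arg2pi z \<in> arg_set p q r s}"

definition phi :: "nat \<Rightarrow> nat \<Rightarrow> nat \<Rightarrow> real \<Rightarrow> complex \<Rightarrow> complex" where
  "phi q s d \<alpha> t = (t ^ q - complex_of_real (1 - \<alpha>)) ^ d
      - complex_of_real (\<alpha> ^ d) * t powi (int (q * d) - int s)"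

definition multiple_root :: "(complex \<Rightarrow> complex) \<Rightarrow> complex \<Rightarrow> bool" where
  "multiple_root f z \<longleftrightarrow> f z = 0 \<and> deriv f z = 0"

end

(*
  At a multiple root z of phi, eliminating (z^q - beta)^(d-1) between phi z = 0 and
  phi' z = 0 gives s z^q = (s - q d) beta; so z^q is real, and then so is
  z^s = (z^q)^d / z^(q d - s).  Hence q arg z and s arg z are multiples of pi: the
  turn fraction x = arg z / 2 pi (or 1 - x on the mirrored interval) is a/2q = b/2s.
  As p/q and r/s are Farey neighbours, (p+1)/q and (r-1)/s lie outside the open
  interval between them, which forces a = 2p + 1 and b = 2r - 1; then
  (2p+1) s = (2r-1) q together with r q - p s <= q gives s <= q.
*)
theory Submission
  imports Defs
begin

lemma in_Farey_reduce:
  assumes "a < b" "b \<le> n"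
  obtains a' b' where "in_Farey n a' b'" "real a' / real b' = real a / real b"
proof
  let ?g = "gcd a b"
  have "?g > 0" using assms(1) by simp
  have a: "a = a div ?g * ?g" and b: "b = b div ?g * ?g" by simp_all
  show "in_Farey n (a div ?g) (b div ?g)"
    unfolding in_Farey_def
  proof (intro conjI)
    show "a div ?g < b div ?g" using assms(1) a b by (metis mult_less_cancel2)
    show "b div ?g \<le> n" using assms(2) div_le_dividend le_trans by blast
    show "coprime (a div ?g) (b div ?g)" using div_gcd_coprime[of a b] assms(1) by simp
  qed
  show "real (a div ?g) / real (b div ?g) = real a / real b"
  proof -
    have "real a / real b = real (a div ?g) * real ?g / (real (b div ?g) * real ?g)"
      by (metis a b of_nat_mult)
    then show ?thesis using \<open>?g > 0\<close> by simp
  qed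
qed

lemma Farey_pair_no_fraction_between:
  assumes "Farey_pair n p q r s" "a < b" "b \<le> n"
    and "real p / real q < real a / real b" "real a / real b < real r / real s"
  shows False
  using in_Farey_reduce[OF assms(2,3)] assms(1,4,5) unfolding Farey_pair_def by metis

lemma Farey_pair_le_succ:
  assumes "Farey_pair n p q r s"
  shows "real r / real s \<le> real (p + 1) / real q"
proof (rule ccontr)
  assume "\<not> ?thesis"
  then have succ_less: "real (p + 1) / real q < real r / real s" by simp
  have "p < q" "q \<le> n" "r < s" using assms unfolding Farey_pair_def in_Farey_def by auto
  then have "real r / real s < 1" by simp
  then have "real (p + 1) / real q < 1" using succ_less by linarith
  with \<open>p < q\<close> have "p + 1 < q" by (simp add: field_simps)
  moreover have "real p / real q < real (p + 1) / real q"
    using \<open>p < q\<close> by (simp add: divide_strict_right_mono)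
  ultimately show False
    using Farey_pair_no_fraction_between[OF assms _ \<open>q \<le> n\<close> _ succ_less] by simp
qed

lemma Farey_pair_pred_le:
  assumes "Farey_pair n p q r s"
  shows "(real r - 1) / real s \<le> real p / real q"
proof (rule ccontr)
  assume "\<not> ?thesis"
  then have pred_greater: "real p / real q < (real r - 1) / real s" by simp
  have "r < s" "s \<le> n" using assms unfolding Farey_pair_def in_Farey_def by auto
  have "r \<ge> 1"
  proof (rule ccontr)
    assume "\<not> r \<ge> 1"
    then have "r = 0" by simp
    then have "(real r - 1) / real s \<le> 0" by simp
    moreover have "0 \<le> real p / real q" by simp
    ultimately show False using pred_greater by linarith
  qed
  then have "real (r - 1) = real r - 1" by simp
  moreover have "real (r - 1) / real s < real r / real s"
    using \<open>r < s\<close> \<open>r \<ge> 1\<close> by (simp add: divide_strict_right_mono)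
  ultimately show False
    using Farey_pair_no_fraction_between[OF assms _ \<open>s \<le> n\<close>, of "r - 1"] pred_greater \<open>r < s\<close>
    by simp
qed

lemma Farey_pair_no_common_half_fraction:
  assumes F: "Farey_pair n p q r s" and "q < s"
    and lo: "real p / real q < x" and hi: "x < real r / real s"
    and "2 * real q * x \<in> \<int>" "2 * real s * x \<in> \<int>"
  shows False
proof -
  obtain a where a: "2 * real q * x = of_int a"
    using \<open>2 * real q * x \<in> \<int>\<close> by (auto elim: Ints_cases)
  obtain b where b: "2 * real s * x = of_int b"
    using \<open>2 * real s * x \<in> \<int>\<close> by (auto elim: Ints_cases)
  have "0 < q" "0 < s" using F unfolding Farey_pair_def in_Farey_def by auto
  have "real_of_int (2 * int p) < of_int a"
    using lo a \<open>0 < q\<close> by (simp add: field_simps)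
  moreover have "x < real (p + 1) / real q" using hi Farey_pair_le_succ[OF F] by linarith
  then have "real_of_int a < of_int (2 * int p + 2)"
    using a \<open>0 < q\<close> by (simp add: field_simps)
  ultimately have a_odd: "a = 2 * int p + 1" by (simp only: of_int_less_iff)
  have "(real r - 1) / real s < x" using lo Farey_pair_pred_le[OF F] by linarith
  then have "real_of_int (2 * int r - 2) < of_int b"
    using b \<open>0 < s\<close> by (simp add: field_simps)
  moreover have "real_of_int b < of_int (2 * int r)"
    using hi b \<open>0 < s\<close> by (simp add: field_simps)
  ultimately have b_odd: "b = 2 * int r - 1" by (simp only: of_int_less_iff)
  have "(2 * real p + 1) * real s = 2 * real q * x * real s" using a a_odd by simp
  also have "\<dots> = (2 * real s * x) * real q" by simp
  also have "\<dots> = (2 * real r - 1) * real q" using b b_odd by simp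
  finally have "(2 * real p + 1) * real s = (2 * real r - 1) * real q" .
  moreover have "real r * real q - real q \<le> real p * real s"
    using Farey_pair_pred_le[OF F] \<open>0 < q\<close> \<open>0 < s\<close> by (simp add: field_simps)
  ultimately have "s \<le> q" by (simp add: algebra_simps)
  with \<open>q < s\<close> show False by simp
qed

lemma Farey_pair_arg_set_no_common_half_turn:
  assumes F: "Farey_pair n p q r s" and "q < s"
    and \<theta>: "\<theta> \<in> arg_set p q r s"
    and q_turn: "real q * \<theta> / pi \<in> \<int>" and s_turn: "real s * \<theta> / pi \<in> \<int>"
  shows False
proof -
  have "0 < q" "0 < s" using F unfolding Farey_pair_def in_Farey_def by auto
  define x where "x = \<theta> / (2 * pi)"
  have q_x: "2 * real q * x \<in> \<int>" and s_x: "2 * real s * x \<in> \<int>"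
    using q_turn s_turn unfolding x_def by simp_all
  from \<theta> consider "2 * pi * real p / real q < \<theta>" "\<theta> < 2 * pi * real r / real s"
    | "2 * pi * (real s - real r) / real s < \<theta>" "\<theta> < 2 * pi * (real q - real p) / real q"
    unfolding arg_set_def by auto
  then show False
  proof cases
    case 1
    then have "real p / real q < x" "x < real r / real s"
      unfolding x_def by (simp_all add: field_simps)
    then show False
      using Farey_pair_no_common_half_fraction[OF F \<open>q < s\<close> _ _ q_x s_x] by simp
  next
    case 2
    then have "real p / real q < 1 - x" "1 - x < real r / real s"
      unfolding x_def using \<open>0 < q\<close> \<open>0 < s\<close> by (simp_all add: field_simps)
    moreover have "2 * real q * (1 - x) = of_nat (2 * q) - 2 * real q * x"
      and "2 * real s * (1 - x) = of_nat (2 * s) - 2 * real s * x"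
      by (simp_all add: algebra_simps)
    ultimately show False
      using Farey_pair_no_common_half_fraction[OF F \<open>q < s\<close>, of "1 - x"] q_x s_x
      by (metis Ints_diff Ints_of_nat)
  qed
qed

lemma arg2pi_times_div_pi_in_Ints:
  fixes z :: complex
  assumes "z ^ k \<in> \<real>"
  shows "real k * arg2pi z / pi \<in> \<int>"
proof (cases "z = 0")
  case True
  then show ?thesis by (simp add: arg2pi_def Arg_zero)
next
  case False
  have "z ^ k = rcis (cmod z ^ k) (real k * Arg z)"
    using DeMoivre2[of "cmod z" "Arg z" k] rcis_cmod_Arg[of z] by simp
  then have "cmod z ^ k * sin (real k * Arg z) = 0"
    using assms by (metis Im_rcis complex_is_Real_iff)
  then have "sin (real k * Arg z) = 0" using False by simp
  then have Arg_turn: "real k * Arg z / pi \<in> \<int>" by (auto simp: sin_zero_iff_int2)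
  have "real k * (Arg z + 2 * pi) / pi = real k * Arg z / pi + of_nat (2 * k)"
    by (simp add: field_simps)
  then show ?thesis
    using Arg_turn unfolding arg2pi_def by (simp add: Ints_add)
qed

lemma of_nat_mult_power_pred_mult:
  fixes x :: "'a :: comm_semiring_1"
  shows "of_nat n * x ^ (n - 1) * x = of_nat n * x ^ n"
  by (cases n) (simp_all add: mult_ac)

lemma phi_multiple_root_power_eq:
  fixes z :: complex
  assumes "\<alpha> \<noteq> 0" "z \<noteq> 0" and root: "multiple_root (phi q s d \<alpha>) z"
  shows "of_nat s * z ^ q = - of_int (int (q * d) - int s) * of_real (1 - \<alpha>)"
proof -
  define m where "m = int (q * d) - int s"
  define \<beta> :: complex where "\<beta> = of_real (1 - \<alpha>)"
  define A :: complex where "A = of_real (\<alpha> ^ d)"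
  define w where "w = z ^ q"
  define T where "T = z powi m"
  have "A * T \<noteq> 0" using assms(1,2) by (simp add: A_def T_def)
  have "(phi q s d \<alpha> has_field_derivative
      of_nat d * (w - \<beta>) ^ (d - 1) * (of_nat q * z ^ (q - 1)) - A * (of_int m * z powi (m - 1))) (at z)"
    unfolding phi_def A_def \<beta>_def m_def w_def
    by (auto intro!: derivative_eq_intros simp: \<open>z \<noteq> 0\<close>)
  then have deriv_zero:
      "of_nat d * (w - \<beta>) ^ (d - 1) * (of_nat q * z ^ (q - 1)) = A * (of_int m * z powi (m - 1))"
    using root DERIV_imp_deriv unfolding multiple_root_def by fastforce
  have phi_zero: "(w - \<beta>) ^ d = A * T"
    using root unfolding multiple_root_def phi_def w_def T_def A_def \<beta>_def m_def by simp
  have z_T: "z * z powi (m - 1) = T"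
    using power_int_add_1'[of z "m - 1"] \<open>z \<noteq> 0\<close> by (simp add: T_def)
  have "(A * T) * (of_nat d * of_nat q * w) = (of_nat d * (w - \<beta>) ^ d) * (of_nat q * z ^ q)"
    unfolding phi_zero[symmetric] w_def by (simp only: mult_ac)
  also have "\<dots> = (of_nat d * (w - \<beta>) ^ (d - 1) * (w - \<beta>)) * (of_nat q * z ^ (q - 1) * z)"
    by (simp only: of_nat_mult_power_pred_mult)
  also have "\<dots> = z * (w - \<beta>) * (of_nat d * (w - \<beta>) ^ (d - 1) * (of_nat q * z ^ (q - 1)))"
    by (simp only: mult_ac)
  also have "\<dots> = z * (w - \<beta>) * (A * (of_int m * z powi (m - 1)))"
    by (simp only: deriv_zero)
  also have "\<dots> = (A * T) * (of_int m * (w - \<beta>))"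
    by (simp add: z_T[symmetric] mult_ac)
  finally have "of_nat d * of_nat q * w = of_int m * (w - \<beta>)"
    using \<open>A * T \<noteq> 0\<close> by simp
  moreover have "of_nat d * of_nat q - of_int m = (of_nat s :: complex)"
    unfolding m_def by simp
  ultimately show ?thesis
    unfolding w_def \<beta>_def m_def by (simp add: algebra_simps)
qed

lemma phi_multiple_root_powers_real:
  fixes z :: complex
  assumes "\<alpha> \<noteq> 0" "0 < s" and root: "multiple_root (phi q s d \<alpha>) z"
  shows "z ^ q \<in> \<real> \<and> z ^ s \<in> \<real>"
proof (cases "z = 0")
  case True
  then show ?thesis by (simp add: power_0_left)
next
  case False
  define m where "m = int (q * d) - int s"
  have "z ^ q = of_real (- of_int m * (1 - \<alpha>) / real s)"
    using phi_multiple_root_power_eq[OF assms(1) False root] \<open>0 < s\<close>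
    unfolding m_def by (simp add: field_simps)
  then have "z ^ q \<in> \<real>" by simp
  have "of_real (\<alpha> ^ d) * z powi m = (z ^ q - of_real (1 - \<alpha>)) ^ d"
    using root unfolding multiple_root_def phi_def m_def by simp
  then have "z powi m = (z ^ q - of_real (1 - \<alpha>)) ^ d / of_real (\<alpha> ^ d)"
    using \<open>\<alpha> \<noteq> 0\<close> by (simp add: field_simps)
  then have "z powi m \<in> \<real>" using \<open>z ^ q \<in> \<real>\<close> by simp
  have "z ^ (q * d) = z powi m * z ^ s"
    using False by (simp add: m_def power_int_add[symmetric] flip: power_int_of_nat)
  then have "z ^ s = (z ^ q) ^ d / z powi m"
    using False by (simp add: power_mult[symmetric] field_simps)
  then have "z ^ s \<in> \<real>" using \<open>z ^ q \<in> \<real>\<close> \<open>z powi m \<in> \<real>\<close> by simp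
  with \<open>z ^ q \<in> \<real>\<close> show ?thesis ..
qed

theorem theorem4p2:
  fixes n p q r s :: nat and \<alpha> :: real
  assumes "Farey_pair n p q r s"
    and "q < s"
    and "0 < \<alpha>" and "\<alpha> < 1"
  shows "\<not> (\<exists>z \<in> K_hat n p q r s. multiple_root (phi q s (n div q) \<alpha>) z)"
proof
  assume "\<exists>z \<in> K_hat n p q r s. multiple_root (phi q s (n div q) \<alpha>) z"
  then obtain z where arg: "arg2pi z \<in> arg_set p q r s"
    and root: "multiple_root (phi q s (n div q) \<alpha>) z"
    unfolding K_hat_def by auto
  have "0 < s" using assms(1) unfolding Farey_pair_def in_Farey_def by auto
  then have "z ^ q \<in> \<real>" "z ^ s \<in> \<real>"
    using phi_multiple_root_powers_real[OF _ _ root] \<open>0 < \<alpha>\<close> by auto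
  then show False
    using Farey_pair_arg_set_no_common_half_turn[OF assms(1,2) arg] arg2pi_times_div_pi_in_Ints
    by blast
qed

end
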